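(* Let $X$ be a real or complex $m\times n$ matrix and $\tilde X=J_m^*XJ_n$ (an $(m+1)\times(n+1)$ matrix all of whose row and column sums are zero). Let $k_m,k_n$ be invertible square matrices with $K_m=k_mk_m^*$ and $K_n=k_nk_n^*$. Then \[\tilde X^+=J_n^*(k_n^{-1})^*(k_m^*Xk_n)^+k_m^{-1}J_m.\]
   Context: $A^*$ denotes conjugate transpose and $A^+$ the Moore–Penrose inverse (the unique $B$ with $ABA=A$, $BAB=B$, $(AB)^*=AB$, $(BA)^*=BA$). For each $p\ge1$, $\mathbf 1$ is the all-ones column vector, $J_p:=[I_p\mid -\mathbf 1]$ is the $p\times(p+1)$ matrix obtained by appending a column of $-1$'s to $I_p$, and $K_p:=J_pJ_p^*=I_p+\mathbf 1\mathbf 1^*$ (symmetric positive definite). *)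

theory Defs
  imports "Jordan_Normal_Form.Schur_Decomposition"
begin

definition mp_inverse :: "'a :: conjugatable_field mat \<Rightarrow> 'a mat" where
  "mp_inverse A = (THE B. B \<in> carrier_mat (dim_col A) (dim_row A) \<and>
      A * B * A = A \<and> B * A * B = B \<and>
      mat_adjoint (A * B) = A * B \<and> mat_adjoint (B * A) = B * A)"

definition inv_mat :: "'a :: field mat \<Rightarrow> 'a mat" where
  "inv_mat A = (THE B. B \<in> carrier_mat (dim_row A) (dim_row A) \<and>
      A * B = 1\<^sub>m (dim_row A) \<and> B * A = 1\<^sub>m (dim_row A))"

definition J_mat :: "nat \<Rightarrow> 'a :: ring_1 mat" where
  "J_mat p = mat p (p + 1) (\<lambda>(i, j). if j = p then - 1 else if i = j then 1 else 0)"

definition K_mat :: "nat \<Rightarrow> 'a :: conjugatable_field mat" where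
  "K_mat p = J_mat p * mat_adjoint (J_mat p)"

end

theory Submission
  imports Defs
begin

(* Write A = J_m^* X J_n.  From J_m J_m^* = k_m k_m^* one obtains the matrix
   P_m = J_m^* (k_m^-1)^*, which has orthonormal columns (P_m^* P_m = I) and
   satisfies J_m^* = P_m k_m^*; likewise for n.  Hence
     A = P_m (k_m^* X k_n) P_n^*,
   and for matrices P, R with orthonormal columns the Moore-Penrose inverse of
   P B R^* is R B^+ P^*. *)

section \<open>The conjugate transpose\<close>

lemma adjoint_dim [simp]:
  "dim_row (mat_adjoint A) = dim_col A" "dim_col (mat_adjoint A) = dim_row A"
  unfolding mat_adjoint_def by auto

lemma adjoint_index [simp]:
  "i < dim_col A \<Longrightarrow> j < dim_row A \<Longrightarrow> mat_adjoint A $$ (i, j) = conjugate (A $$ (j, i))"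
  unfolding mat_adjoint_def mat_of_rows_def by auto

lemma adjoint_carrier [simp]: "A \<in> carrier_mat r c \<Longrightarrow> mat_adjoint A \<in> carrier_mat c r"
  unfolding carrier_mat_def by simp

lemma adjoint_adjoint [simp]: "mat_adjoint (mat_adjoint A) = A"
  by (rule eq_matI) simp_all

lemma conjugate_one [simp]: "conjugate (1 :: 'a :: conjugatable_field) = 1"
proof -
  have "conjugate (1 :: 'a) * 1 = conjugate 1 * conjugate 1"
    using conjugate_dist_mul[of "1 :: 'a" 1] by simp
  moreover have "conjugate (1 :: 'a) \<noteq> 0" by simp
  ultimately show ?thesis by (metis mult_left_cancel)
qed

lemma adjoint_one [simp]: "mat_adjoint (1\<^sub>m n :: 'a :: conjugatable_field mat) = 1\<^sub>m n"
  by (rule eq_matI) simp_all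

lemma adjoint_mult:
  fixes A :: "'a :: conjugatable_field mat"
  assumes "dim_col A = dim_row B"
  shows "mat_adjoint (A * B) = mat_adjoint B * mat_adjoint A"
proof (rule eq_matI)
  fix i j
  assume i: "i < dim_row (mat_adjoint B * mat_adjoint A)"
    and j: "j < dim_col (mat_adjoint B * mat_adjoint A)"
  have "mat_adjoint (A * B) $$ (i, j) = (\<Sum>k\<in>{0..<dim_row B}. conjugate (A $$ (j, k) * B $$ (k, i)))"
    using i j assms by (simp add: scalar_prod_def sum_conjugate)
  also have "\<dots> = (\<Sum>k\<in>{0..<dim_row B}. conjugate (B $$ (k, i)) * conjugate (A $$ (j, k)))"
    by (simp add: conjugate_dist_mul mult.commute)
  also have "\<dots> = (mat_adjoint B * mat_adjoint A) $$ (i, j)"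
    using i j assms by (simp add: scalar_prod_def)
  finally show "mat_adjoint (A * B) $$ (i, j) = (mat_adjoint B * mat_adjoint A) $$ (i, j)" .
qed simp_all

(* Over an ordered conjugatable field the Gram matrix detects zero: E^* E = 0 forces
   E = 0, since each diagonal entry of E^* E is the squared norm of a column of E. *)
lemma adjoint_self_mult_zero:
  fixes E :: "'a :: conjugatable_ordered_field mat"
  assumes "mat_adjoint E * E = 0\<^sub>m (dim_col E) (dim_col E)"
  shows "E = 0\<^sub>m (dim_row E) (dim_col E)"
proof (rule eq_matI)
  fix i j
  assume i: "i < dim_row (0\<^sub>m (dim_row E) (dim_col E) :: 'a mat)"
    and j: "j < dim_col (0\<^sub>m (dim_row E) (dim_col E) :: 'a mat)"
  have "(mat_adjoint E * E) $$ (j, j) = 0" using assms j by simp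
  hence "col E j \<bullet>c col E j = 0"
    using j by (simp add: scalar_prod_def mult.commute)
  hence "col E j = 0\<^sub>v (dim_row E)"
    using conjugate_square_eq_0_vec[of "col E j" "dim_row E"] by simp
  hence "col E j $ i = 0" using i by simp
  thus "E $$ (i, j) = 0\<^sub>m (dim_row E) (dim_col E) $$ (i, j)" using i j by simp
qed simp_all

(* Associativity with dimension side conditions only, so that it can be used for
   rewriting when the operands are not given by carrier hypotheses. *)
lemma mult_assoc_dim:
  "dim_col A = dim_row B \<Longrightarrow> dim_col B = dim_row C \<Longrightarrow> A * B * C = A * (B * C)"
  by (rule assoc_mult_mat[of A "dim_row A" "dim_col A" B "dim_col B" C "dim_col C"]) auto

(* A left factor A^* may be cancelled in A^* A U = A^* A V: with D = U - V one has
   A^* (A D) = 0, hence (A D)^* (A D) = 0 and so A D = 0. *)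
lemma adjoint_mult_cancel:
  fixes A :: "'a :: conjugatable_ordered_field mat"
  assumes A: "A \<in> carrier_mat r c" and U: "U \<in> carrier_mat c k" and V: "V \<in> carrier_mat c k"
    and eq: "mat_adjoint A * (A * U) = mat_adjoint A * (A * V)"
  shows "A * U = A * V"
proof -
  define D where "D = U - V"
  have D: "D \<in> carrier_mat c k" unfolding D_def by (rule minus_carrier_mat[OF V])
  have AD: "A * D = A * U - A * V" unfolding D_def by (rule mult_minus_distrib_mat[OF A U V])
  have "mat_adjoint A * (A * D) = mat_adjoint A * (A * U) - mat_adjoint A * (A * V)"
    unfolding AD using A U V by (intro mult_minus_distrib_mat) auto
  also have "\<dots> = 0\<^sub>m c k" unfolding eq using A V by (intro minus_r_inv_mat) auto
  finally have "mat_adjoint (A * D) * (A * D) = 0\<^sub>m k k"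
    using A D by (simp add: adjoint_mult mult_assoc_dim)
  hence "A * D = 0\<^sub>m r k" using adjoint_self_mult_zero[of "A * D"] A D by simp
  hence diff: "A * U - A * V = 0\<^sub>m r k" unfolding AD .
  show ?thesis
  proof (rule eq_matI)
    fix i j assume ij: "i < dim_row (A * V)" "j < dim_col (A * V)"
    hence "(A * U - A * V) $$ (i, j) = 0" using A V by (simp only: diff) simp
    thus "(A * U) $$ (i, j) = (A * V) $$ (i, j)" using ij A U V by simp
  qed (use A U V in simp_all)
qed

section \<open>The Moore-Penrose inverse\<close>

definition is_moore_penrose :: "'a :: conjugatable_field mat \<Rightarrow> 'a mat \<Rightarrow> bool" where
  "is_moore_penrose A B \<longleftrightarrow> B \<in> carrier_mat (dim_col A) (dim_row A) \<and>
      A * B * A = A \<and> B * A * B = B \<and>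
      mat_adjoint (A * B) = A * B \<and> mat_adjoint (B * A) = B * A"

(* Penrose's uniqueness argument: B1 = B1 A B2 = B2, using only the four equations. *)
lemma moore_penrose_unique:
  fixes A :: "'a :: conjugatable_field mat"
  assumes A: "A \<in> carrier_mat r c" and 1: "is_moore_penrose A B1" and 2: "is_moore_penrose A B2"
  shows "B1 = B2"
proof -
  have B1: "B1 \<in> carrier_mat c r" and a1: "A * B1 * A = A" and b1: "B1 * A * B1 = B1"
    and c1: "mat_adjoint (A * B1) = A * B1" and d1: "mat_adjoint (B1 * A) = B1 * A"
    using 1 A unfolding is_moore_penrose_def by simp_all
  have B2: "B2 \<in> carrier_mat c r" and a2: "A * B2 * A = A" and b2: "B2 * A * B2 = B2"
    and c2: "mat_adjoint (A * B2) = A * B2" and d2: "mat_adjoint (B2 * A) = B2 * A"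
    using 2 A unfolding is_moore_penrose_def by simp_all
  note dims = carrier_matD[OF A] carrier_matD[OF B1] carrier_matD[OF B2]
  have adjA1: "mat_adjoint A = mat_adjoint A * (mat_adjoint B1 * mat_adjoint A)"
    using arg_cong[OF a1, of mat_adjoint] dims by (simp add: adjoint_mult mult_assoc_dim)
  have adjA2: "mat_adjoint A = mat_adjoint A * (mat_adjoint B2 * mat_adjoint A)"
    using arg_cong[OF a2, of mat_adjoint] dims by (simp add: adjoint_mult mult_assoc_dim)
  have "B1 = B1 * (mat_adjoint B1 * mat_adjoint A)"
    using b1 c1 dims by (simp add: adjoint_mult mult_assoc_dim)
  also have "\<dots> = B1 * ((mat_adjoint B1 * mat_adjoint A) * (mat_adjoint B2 * mat_adjoint A))"
    using dims by (subst (1) adjA2) (simp add: mult_assoc_dim)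
  also have "\<dots> = (B1 * A * B1) * (A * B2)"
    using c1 c2 dims by (simp add: adjoint_mult mult_assoc_dim)
  finally have left: "B1 = B1 * A * B2" using b1 dims by (simp add: mult_assoc_dim)
  have "B2 = (mat_adjoint A * mat_adjoint B2) * B2"
    using b2 d2 dims by (simp add: adjoint_mult)
  also have "\<dots> = ((mat_adjoint A * mat_adjoint B1) * (mat_adjoint A * mat_adjoint B2)) * B2"
    using dims by (subst (1) adjA1) (simp add: mult_assoc_dim)
  also have "\<dots> = B1 * A * (B2 * A * B2)"
    using d1 d2 dims by (simp add: adjoint_mult mult_assoc_dim)
  finally show ?thesis using left b2 by simp
qed

lemma mp_inverse_eqI:
  fixes A :: "'a :: conjugatable_field mat"
  assumes A: "A \<in> carrier_mat r c" and B: "is_moore_penrose A B"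
  shows "mp_inverse A = B"
proof -
  have "mp_inverse A = (THE B. is_moore_penrose A B)"
    unfolding mp_inverse_def is_moore_penrose_def by simp
  also have "\<dots> = B" using B moore_penrose_unique[OF A] by blast
  finally show ?thesis .
qed

(* A reduced row echelon matrix C has an inner inverse Z (C Z C = C): Z maps the
   i-th standard basis vector to the pivot column of row i (or to 0 for zero rows).
   Then C Z is the diagonal projection onto the nonzero rows, which fixes C. *)
lemma row_echelon_inner_inverse:
  fixes C :: "'a :: field mat"
  assumes C: "C \<in> carrier_mat nr nc" and ref: "row_echelon_form C"
  shows "\<exists>Z \<in> carrier_mat nc nr. C * Z * C = C"
proof -
  obtain f where piv: "pivot_fun C f nc" using ref C unfolding row_echelon_form_def by auto
  note pivot = pivot_funD[OF carrier_matD(1)[OF C] piv]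
  define Z where "Z = mat nc nr (\<lambda>(j, i). if f i < nc \<and> j = f i then (1 :: 'a) else 0)"
  define D where "D = mat nr nr (\<lambda>(i', i). if f i < nc \<and> i' = i then (1 :: 'a) else 0)"
  have CZ: "C * Z = D"
  proof (rule eq_matI)
    fix i' i assume "i' < dim_row D" "i < dim_col D"
    hence i: "i' < nr" "i < nr" unfolding D_def by simp_all
    have "(C * Z) $$ (i', i) = (\<Sum>j\<in>{0..<nc}. if f i < nc \<and> j = f i then C $$ (i', j) else 0)"
      using i C unfolding Z_def by (auto simp: scalar_prod_def intro!: sum.cong)
    also have "\<dots> = (if f i < nc then C $$ (i', f i) else 0)" by auto
    also have "\<dots> = D $$ (i', i)" using i pivot(4)[of i] pivot(5)[of i i'] unfolding D_def by auto
    finally show "(C * Z) $$ (i', i) = D $$ (i', i)" .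
  qed (use C in \<open>simp_all add: D_def Z_def\<close>)
  have DC: "D * C = C"
  proof (rule eq_matI)
    fix i' k assume "i' < dim_row C" "k < dim_col C"
    hence i: "i' < nr" "k < nc" using C by simp_all
    have "(D * C) $$ (i', k) =
        (\<Sum>i\<in>{0..<nr}. (if i = i' then (if f i' < nc then 1 else 0) else 0) * C $$ (i, k))"
      using i C unfolding D_def by (auto simp: scalar_prod_def intro!: sum.cong sum.neutral)
    also have "\<dots> = (if f i' < nc then C $$ (i', k) else 0)"
      using i by (simp add: if_distrib[of "\<lambda>x. x * _"] cong: if_cong)
    also have "\<dots> = C $$ (i', k)"
      using i pivot(1)[of i'] pivot(2)[of i' k] by (auto simp: le_less)
    finally show "(D * C) $$ (i', k) = C $$ (i', k)" .
  qed (use C in \<open>simp_all add: D_def\<close>)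
  have "C * Z * C = C" unfolding CZ DC ..
  moreover have "Z \<in> carrier_mat nc nr" unfolding Z_def by simp
  ultimately show ?thesis by blast
qed

(* Every matrix has an inner inverse: Gauss-Jordan writes A = Q C with Q invertible
   (inverse P) and C in reduced row echelon form, and Z P is an inner inverse of A. *)
lemma inner_inverse_exists:
  fixes A :: "'a :: field mat"
  assumes A: "A \<in> carrier_mat nr nc"
  shows "\<exists>Y \<in> carrier_mat nc nr. A * Y * A = A"
proof -
  define C where "C = gauss_jordan_single A"
  note gj = gauss_jordan_single[OF A C_def[symmetric]]
  have C: "C \<in> carrier_mat nr nc" by (rule gj(2))
  obtain P Q where CPA: "C = P * A" and P: "P \<in> carrier_mat nr nr" and Q: "Q \<in> carrier_mat nr nr"
    and QP: "Q * P = 1\<^sub>m nr" using gj(4) by blast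
  obtain Z where Z: "Z \<in> carrier_mat nc nr" and CZC: "C * Z * C = C"
    using row_echelon_inner_inverse[OF C gj(3)] by blast
  have QC: "Q * C = A" unfolding CPA using Q P A QP by (simp flip: mult_assoc_dim)
  have "A * (Z * P) * A = Q * C * (Z * P) * A" unfolding QC ..
  also have "\<dots> = Q * (C * Z * (P * A))" using Q C Z P A by (simp add: mult_assoc_dim)
  also have "\<dots> = A" unfolding CPA[symmetric] CZC QC ..
  finally show ?thesis using Z P by (intro bexI[of _ "Z * P"]) auto
qed

(* A {1,3}-inverse (A G A = A with A G hermitian) is G = Y A^*, where Y is an inner
   inverse of the Gram matrix M = A^* A.  The key identity A Y M = A follows by
   cancelling A^* from A^* A Y M = M Y M = M. *)
lemma least_squares_inverse_exists:
  fixes A :: "'a :: conjugatable_ordered_field mat"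
  assumes A: "A \<in> carrier_mat r c"
  shows "\<exists>G \<in> carrier_mat c r. A * G * A = A \<and> mat_adjoint (A * G) = A * G"
proof -
  define M where "M = mat_adjoint A * A"
  have M: "M \<in> carrier_mat c c"
    unfolding M_def by (rule mult_carrier_mat[OF adjoint_carrier[OF A] A])
  obtain Y where Y: "Y \<in> carrier_mat c c" and MYM: "M * Y * M = M"
    using inner_inverse_exists[OF M] by blast
  have "mat_adjoint A * (A * (Y * M)) = mat_adjoint A * (A * 1\<^sub>m c)"
    using MYM A Y unfolding M_def by (simp add: mult_assoc_dim)
  hence AYM: "A * Y * M = A"
    using adjoint_mult_cancel[OF A _ one_carrier_mat] A Y M by (simp add: mult_assoc_dim)
  have adjA: "M * mat_adjoint Y * mat_adjoint A = mat_adjoint A"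
    using arg_cong[OF AYM, of mat_adjoint] A Y unfolding M_def
    by (simp add: adjoint_mult mult_assoc_dim)
  define G where "G = Y * mat_adjoint A"
  have G: "G \<in> carrier_mat c r" unfolding G_def using Y A by simp
  have "A * G * A = A"
    using AYM A Y unfolding G_def M_def by (simp add: mult_assoc_dim)
  moreover have "mat_adjoint (A * G) = A * G"
  proof -
    have "mat_adjoint (A * G) = A * Y * M * mat_adjoint Y * mat_adjoint A"
      unfolding G_def AYM using A Y by (simp add: adjoint_mult mult_assoc_dim)
    also have "\<dots> = A * Y * (M * mat_adjoint Y * mat_adjoint A)"
      using A Y M by (simp add: mult_assoc_dim)
    also have "\<dots> = A * G" unfolding adjA G_def using A Y by (simp add: mult_assoc_dim)
    finally show ?thesis .
  qed
  ultimately show ?thesis using G by blast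
qed

(* Dually, a {1,4}-inverse (A H A = A with H A hermitian) is the adjoint of a
   {1,3}-inverse of A^*. *)
lemma minimum_norm_inverse_exists:
  fixes A :: "'a :: conjugatable_ordered_field mat"
  assumes A: "A \<in> carrier_mat r c"
  shows "\<exists>H \<in> carrier_mat c r. A * H * A = A \<and> mat_adjoint (H * A) = H * A"
proof -
  obtain G where G: "G \<in> carrier_mat r c" and GA: "mat_adjoint A * G * mat_adjoint A = mat_adjoint A"
    and herm: "mat_adjoint (mat_adjoint A * G) = mat_adjoint A * G"
    using least_squares_inverse_exists[OF adjoint_carrier[OF A]] by blast
  have "A * mat_adjoint G * A = mat_adjoint (mat_adjoint A * G * mat_adjoint A)"
    using A G by (simp add: adjoint_mult mult_assoc_dim)
  moreover have "mat_adjoint G * A = mat_adjoint (mat_adjoint A * G)"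
    using A G by (simp add: adjoint_mult)
  ultimately show ?thesis using G GA herm
    by (intro bexI[of _ "mat_adjoint G"]) auto
qed

(* Existence: combining a {1,3}-inverse G and a {1,4}-inverse H, the matrix H A G
   satisfies all four Penrose equations. *)
lemma moore_penrose_exists:
  fixes A :: "'a :: conjugatable_ordered_field mat"
  assumes A: "A \<in> carrier_mat r c"
  shows "\<exists>B. is_moore_penrose A B"
proof -
  obtain G where G: "G \<in> carrier_mat c r" and AGA: "A * G * A = A"
    and AG: "mat_adjoint (A * G) = A * G"
    using least_squares_inverse_exists[OF A] by blast
  obtain H where H: "H \<in> carrier_mat c r" and AHA: "A * H * A = A"
    and HA: "mat_adjoint (H * A) = H * A"
    using minimum_norm_inverse_exists[OF A] by blast
  define B where "B = H * A * G"
  have "A * B = A * H * A * G" unfolding B_def using A H G by (simp add: mult_assoc_dim)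
  hence AB: "A * B = A * G" unfolding AHA .
  have "B * A = H * (A * G * A)" unfolding B_def using A H G by (simp add: mult_assoc_dim)
  hence BA: "B * A = H * A" unfolding AGA .
  have "B * A * B = H * (A * H * A) * G"
    unfolding BA unfolding B_def using A H G by (simp add: mult_assoc_dim)
  hence "B * A * B = B" unfolding AHA B_def .
  moreover have "A * B * A = A" unfolding AB by (rule AGA)
  moreover have "B \<in> carrier_mat c r"
    unfolding B_def by (rule mult_carrier_mat[OF mult_carrier_mat[OF H A] G])
  ultimately have "is_moore_penrose A B"
    unfolding is_moore_penrose_def AB BA using A AG HA by simp
  thus ?thesis ..
qed

lemma mp_inverse_is_moore_penrose:
  fixes A :: "'a :: conjugatable_ordered_field mat"
  assumes A: "A \<in> carrier_mat r c"
  shows "is_moore_penrose A (mp_inverse A)"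
  using moore_penrose_exists[OF A] mp_inverse_eqI[OF A] by metis

lemma moore_penrose_isometry:
  fixes P B R C :: "'a :: conjugatable_field mat"
  assumes P: "P \<in> carrier_mat p r" and B: "B \<in> carrier_mat r c" and R: "R \<in> carrier_mat q c"
    and PP: "mat_adjoint P * P = 1\<^sub>m r" and RR: "mat_adjoint R * R = 1\<^sub>m c"
    and C: "is_moore_penrose B C"
  shows "is_moore_penrose (P * B * mat_adjoint R) (R * C * mat_adjoint P)"
proof -
  have Cc: "C \<in> carrier_mat c r" and BCB: "B * C * B = B" and CBC: "C * B * C = C"
    and BC: "mat_adjoint (B * C) = B * C" and CB: "mat_adjoint (C * B) = C * B"
    using C B unfolding is_moore_penrose_def by simp_all
  note dims = carrier_matD[OF P] carrier_matD[OF B] carrier_matD[OF R] carrier_matD[OF Cc]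
  (* the hypotheses in the form in which they occur inside right-nested products *)
  have PP': "mat_adjoint P * (P * Z) = Z" if "dim_row Z = r" for Z
    using PP dims that by (simp flip: mult_assoc_dim)
  have RR': "mat_adjoint R * (R * Z) = Z" if "dim_row Z = c" for Z
    using RR dims that by (simp flip: mult_assoc_dim)
  have BCB': "B * (C * (B * Z)) = B * Z" if "dim_row Z = c" for Z
    using BCB dims that by (simp flip: mult_assoc_dim)
  have CBC': "C * (B * (C * Z)) = C * Z" if "dim_row Z = r" for Z
    using CBC dims that by (simp flip: mult_assoc_dim)
  have BC': "mat_adjoint C * (mat_adjoint B * Z) = B * (C * Z)" if "dim_row Z = r" for Z
    using BC dims that by (simp add: adjoint_mult flip: mult_assoc_dim)
  have CB': "mat_adjoint B * (mat_adjoint C * Z) = C * (B * Z)" if "dim_row Z = c" for Z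
    using CB dims that by (simp add: adjoint_mult flip: mult_assoc_dim)
  show ?thesis unfolding is_moore_penrose_def
  proof (intro conjI)
    show "R * C * mat_adjoint P \<in>
        carrier_mat (dim_col (P * B * mat_adjoint R)) (dim_row (P * B * mat_adjoint R))"
      using dims by (intro carrier_matI) simp_all
    show "P * B * mat_adjoint R * (R * C * mat_adjoint P) * (P * B * mat_adjoint R) =
        P * B * mat_adjoint R"
      using dims by (simp add: mult_assoc_dim PP' RR' BCB')
    show "R * C * mat_adjoint P * (P * B * mat_adjoint R) * (R * C * mat_adjoint P) =
        R * C * mat_adjoint P"
      using dims by (simp add: mult_assoc_dim PP' RR' CBC')
    show "mat_adjoint (P * B * mat_adjoint R * (R * C * mat_adjoint P)) =
        P * B * mat_adjoint R * (R * C * mat_adjoint P)"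
      using dims by (simp add: adjoint_mult mult_assoc_dim RR' BC')
    show "mat_adjoint (R * C * mat_adjoint P * (P * B * mat_adjoint R)) =
        R * C * mat_adjoint P * (P * B * mat_adjoint R)"
      using dims by (simp add: adjoint_mult mult_assoc_dim PP' CB')
  qed
qed

section \<open>The centred matrix in orthonormal coordinates\<close>

lemma inv_mat_props:
  fixes k :: "'a :: field mat"
  assumes k: "k \<in> carrier_mat n n" and inv: "invertible_mat k"
  shows "inv_mat k \<in> carrier_mat n n" "k * inv_mat k = 1\<^sub>m n" "inv_mat k * k = 1\<^sub>m n"
proof -
  obtain B where kB: "k * B = 1\<^sub>m (dim_row k)" and Bk: "B * k = 1\<^sub>m (dim_row B)"
    using inv unfolding invertible_mat_def inverts_mat_def by blast
  have "dim_row B = n" using arg_cong[OF Bk, of dim_col] k by simp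
  moreover have "dim_col B = n" using arg_cong[OF kB, of dim_col] k by simp
  ultimately have B: "B \<in> carrier_mat n n" by blast
  hence kB: "k * B = 1\<^sub>m n" and Bk: "B * k = 1\<^sub>m n" using kB Bk k by simp_all
  have unique: "B' = B" if "B' \<in> carrier_mat n n" "B' * k = 1\<^sub>m n" for B'
  proof -
    have "B' = B' * (k * B)" using kB that by simp
    also have "\<dots> = B" using that k B Bk by (simp flip: mult_assoc_dim)
    finally show ?thesis .
  qed
  have "inv_mat k = B" unfolding inv_mat_def carrier_matD(1)[OF k]
  proof (rule the_equality)
    show "B \<in> carrier_mat n n \<and> k * B = 1\<^sub>m n \<and> B * k = 1\<^sub>m n" using B kB Bk by blast
    show "B' = B" if "B' \<in> carrier_mat n n \<and> k * B' = 1\<^sub>m n \<and> B' * k = 1\<^sub>m n" for B'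
      using unique that by blast
  qed
  thus "inv_mat k \<in> carrier_mat n n" "k * inv_mat k = 1\<^sub>m n" "inv_mat k * k = 1\<^sub>m n"
    using B kB Bk by simp_all
qed

(* If J J^* = k k^* with k invertible, then P = J^* (k^-1)^* has orthonormal columns
   and J = k P^*.  Applied to J_p and K_p = J_p J_p^*, this turns the centring
   matrices into isometries. *)
lemma orthonormal_factor:
  fixes J k :: "'a :: conjugatable_field mat"
  assumes J: "J \<in> carrier_mat p q" and k: "k \<in> carrier_mat p p" and inv: "invertible_mat k"
    and JJ: "J * mat_adjoint J = k * mat_adjoint k"
  defines "P \<equiv> mat_adjoint J * mat_adjoint (inv_mat k)"
  shows "P \<in> carrier_mat q p" and "mat_adjoint P = inv_mat k * J"
    and "mat_adjoint P * P = 1\<^sub>m p" and "J = k * mat_adjoint P"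
proof -
  note ik = inv_mat_props[OF k inv]
  note dims = carrier_matD[OF J] carrier_matD[OF k] carrier_matD[OF ik(1)]
  show "P \<in> carrier_mat q p" unfolding P_def
    by (rule mult_carrier_mat[OF adjoint_carrier[OF J] adjoint_carrier[OF ik(1)]])
  show adjP: "mat_adjoint P = inv_mat k * J"
    unfolding P_def using dims by (simp add: adjoint_mult)
  have "mat_adjoint P * P = inv_mat k * (J * mat_adjoint J) * mat_adjoint (inv_mat k)"
    unfolding adjP unfolding P_def using dims by (simp add: mult_assoc_dim)
  also have "\<dots> = (inv_mat k * k) * mat_adjoint k * mat_adjoint (inv_mat k)"
    unfolding JJ using dims by (simp add: mult_assoc_dim)
  also have "\<dots> = mat_adjoint k * mat_adjoint (inv_mat k)" unfolding ik(3) using k by simp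
  also have "\<dots> = mat_adjoint (inv_mat k * k)" using dims by (simp add: adjoint_mult)
  finally show "mat_adjoint P * P = 1\<^sub>m p" unfolding ik(3) by simp
  have "k * mat_adjoint P = (k * inv_mat k) * J"
    unfolding adjP using dims by (simp add: mult_assoc_dim)
  thus "J = k * mat_adjoint P" unfolding ik(2) using J by simp
qed

lemma J_mat_carrier: "(J_mat p :: 'a :: ring_1 mat) \<in> carrier_mat p (p + 1)"
  unfolding J_mat_def by simp

theorem theorem7:
  fixes X km kn :: "'a :: conjugatable_ordered_field mat"
  assumes "m \<ge> 1" and "n \<ge> 1"
    and "X \<in> carrier_mat m n"
    and "km \<in> carrier_mat m m" and "kn \<in> carrier_mat n n"
    and "invertible_mat km" and "invertible_mat kn"
    and "K_mat m = km * mat_adjoint km"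
    and "K_mat n = kn * mat_adjoint kn"
  shows "mp_inverse (mat_adjoint (J_mat m) * X * J_mat n) =
    mat_adjoint (J_mat n) * mat_adjoint (inv_mat kn)
      * mp_inverse (mat_adjoint km * X * kn) * inv_mat km * J_mat m"
proof -
  note X = assms(3) and km = assms(4) and kn = assms(5)
  define Pm where "Pm = mat_adjoint (J_mat m) * mat_adjoint (inv_mat km)"
  define Pn where "Pn = mat_adjoint (J_mat n) * mat_adjoint (inv_mat kn)"
  define B where "B = mat_adjoint km * X * kn"
  note factor_m = orthonormal_factor[OF J_mat_carrier km assms(6) assms(8)[unfolded K_mat_def],
      folded Pm_def]
  note factor_n = orthonormal_factor[OF J_mat_carrier kn assms(7) assms(9)[unfolded K_mat_def],
      folded Pn_def]
  have B: "B \<in> carrier_mat m n"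
    unfolding B_def by (rule mult_carrier_mat[OF mult_carrier_mat[OF adjoint_carrier[OF km] X] kn])
  have C: "is_moore_penrose B (mp_inverse B)" by (rule mp_inverse_is_moore_penrose[OF B])
  hence Cc: "mp_inverse B \<in> carrier_mat n m" using B unfolding is_moore_penrose_def by simp
  have "mat_adjoint (J_mat m) * X * J_mat n =
      mat_adjoint (km * mat_adjoint Pm) * X * (kn * mat_adjoint Pn)"
    by (simp flip: factor_m(4) factor_n(4))
  also have "\<dots> = Pm * B * mat_adjoint Pn"
    unfolding B_def using carrier_matD[OF factor_m(1)] carrier_matD[OF factor_n(1)] X km kn
    by (simp add: adjoint_mult mult_assoc_dim)
  finally have "mp_inverse (mat_adjoint (J_mat m) * X * J_mat n) =
      mp_inverse (Pm * B * mat_adjoint Pn)" by simp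
  also have "\<dots> = Pn * mp_inverse B * (inv_mat km * J_mat m)"
    unfolding factor_m(2)[symmetric] using factor_m factor_n B C
    by (intro mp_inverse_eqI[of _ "m + 1" "n + 1"] moore_penrose_isometry) auto
  also have "\<dots> = mat_adjoint (J_mat n) * mat_adjoint (inv_mat kn)
      * mp_inverse B * inv_mat km * J_mat m"
    unfolding Pn_def using Cc carrier_matD[OF inv_mat_props(1)[OF km assms(6)]]
    by (simp add: mult_assoc_dim J_mat_def)
  finally show ?thesis unfolding B_def .
qed

end
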